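(* For any $q\in[0,1)^{\mathscr S}$, \[ \lim_{n\to\infty,\ \rho\to0}\ \limsup_{N\to\infty}\big|\mathbb E F_N^q(n,\rho)-\mathbb E\tilde F_N^q(n,\rho)\big|=0. \]
   Context: Fix a finite set $\mathscr S$ of species. For each $N\ge1$, $\{1,\dots,N\}=\bigcup_{s\in\mathscr S}I_s$ with disjoint $I_s$, $N_s=|I_s|$, $N_s/N\to\lambda_s\in(0,1)$. $S(d)=\{x\in\mathbb R^d:\|x\|=\sqrt d\}$, $S_N=\{\sigma\in\mathbb R^N:(\sigma_i)_{i\in I_s}\in S(N_s)\ \forall s\}$, $\mu$ = product of uniform probability measures on the $S(N_s)$. $R_s(\sigma,\sigma')=N_s^{-1}\sum_{i\in I_s}\sigma_i\sigma'_i$. $P=\{p\in\mathbb Z_{\ge0}^{\mathscr S}:|p|\ge1\}$, $|p|=\sum_sp(s)$. A mixture is $\xi(x)=\sum_{p\in P}\Delta_p^2\prod_sx(s)^{p(s)}$, $\Delta_p\ge0$, $\xi(1+\epsilon)<\infty$ for some $\epsilon>0$; its Hamiltonian is $H_N(\sigma)=\sqrt N\sum_{k\ge1}\sum_{i_1,\dots,i_k=1}^N\Delta_{i_1,\dots,i_k}J_{i_1,\dots,i_k}\sigma_{i_1}\cdots\sigma_{i_k}$, $J$ i.i.d. standard Gaussian, $\Delta_{i_1,\dots,i_k}^2=\Delta_p^2\frac{\prod_sp(s)!}{k!}\prod_sN_s^{-p(s)}$ when $\#\{j:i_j\in I_s\}=p(s)$ for all $s$. Fix a mixture $\xi$. For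 $q\in[0,1)^{\mathscr S}$: $\Delta_{q,p}^2=\sum_{p'\ge p}\Delta_{p'}^2\prod_s\binom{p'(s)}{p(s)}(1-q(s))^{p(s)}q(s)^{p'(s)-p(s)}$, $\tilde\xi_q(x)=\sum_{p\in P}\Delta_{q,p}^2\prod_sx(s)^{p(s)}$ $(=\xi((1-q)x+q)-\xi(q))$, $\xi_q(x)=\sum_{|p|\ge2}\Delta_{q,p}^2\prod_sx(s)^{p(s)}$; $\tilde H_N^q$, $H_N^q$ are their Hamiltonians. With $B(0,n,\rho)=\{(\sigma^i)_{i\le n}\in S_N^n:\forall i\ne j,s,|R_s(\sigma^i,\sigma^j)|\le\rho\}$, define $F_N^q(n,\rho)=\frac1{Nn}\log\int_{B(0,n,\rho)}e^{\sum_{i\le n}H_N^q(\sigma^i)}d\mu^{\otimes n}$ and $\tilde F_N^q(n,\rho)$ likewise with $\tilde H_N^q$. *)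

theory Defs
  imports "HOL-Probability.Probability"
begin

text \<open>Indices of \<open>{1..N}\<close> are relabelled as \<open>{..<N}\<close>.
  A configuration is a function \<open>nat \<Rightarrow> real\<close> (only the values on \<open>{..<N}\<close> matter).
  The species partition is a family \<open>I :: nat \<Rightarrow> 's \<Rightarrow> nat set\<close>, \<open>I N s\<close> = block of species s.\<close>

definition norm_p :: "('s::finite \<Rightarrow> nat) \<Rightarrow> nat" where
  "norm_p p = (\<Sum>s\<in>UNIV. p s)"

text \<open>Uniform probability measure on the sphere of radius \<open>sqrt |A|\<close> in \<open>\<real>^A\<close>
  (normalized surface measure = cone measure: push-forward of the uniform
   measure on the unit ball under radial projection).\<close>
definition unit_ball_fin :: "nat set \<Rightarrow> (nat \<Rightarrow> real) set" where
  "unit_ball_fin A = {x \<in> PiE A (\<lambda>_. UNIV). (\<Sum>i\<in>A. (x i)\<^sup>2) \<le> 1}"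

definition sphere_unif :: "nat set \<Rightarrow> (nat \<Rightarrow> real) measure" where
  "sphere_unif A = distr (uniform_measure (PiM A (\<lambda>_. lborel)) (unit_ball_fin A))
      (PiM A (\<lambda>_. lborel))
      (\<lambda>x. restrict (\<lambda>i. sqrt (real (card A)) * x i / sqrt (\<Sum>j\<in>A. (x j)\<^sup>2)) A)"

definition mu_N :: "(nat \<Rightarrow> 's::finite \<Rightarrow> nat set) \<Rightarrow> nat \<Rightarrow> (nat \<Rightarrow> real) measure" where
  "mu_N I N = distr (PiM (UNIV :: 's set) (\<lambda>s. sphere_unif (I N s)))
      (PiM {..<N} (\<lambda>_. lborel))
      (\<lambda>\<omega>. restrict (\<lambda>i. \<omega> (THE s. i \<in> I N s) i) {..<N})"

definition S_N :: "(nat \<Rightarrow> 's::finite \<Rightarrow> nat set) \<Rightarrow> nat \<Rightarrow> (nat \<Rightarrow> real) set" where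
  "S_N I N = {\<sigma>. \<forall>s. (\<Sum>i\<in>I N s. (\<sigma> i)\<^sup>2) = real (card (I N s))}"

definition overlap :: "(nat \<Rightarrow> 's \<Rightarrow> nat set) \<Rightarrow> nat \<Rightarrow> 's \<Rightarrow> (nat \<Rightarrow> real) \<Rightarrow> (nat \<Rightarrow> real) \<Rightarrow> real" where
  "overlap I N s \<sigma> \<sigma>' = (\<Sum>i\<in>I N s. \<sigma> i * \<sigma>' i) / real (card (I N s))"

text \<open>Disorder: i.i.d. standard Gaussians \<open>J_{i_1..i_k}\<close> indexed by all finite tuples (lists).\<close>
definition disorder :: "(nat list \<Rightarrow> real) measure" where
  "disorder = PiM UNIV (\<lambda>_::nat list. density lborel std_normal_density)"

text \<open>Number of entries of a tuple belonging to species s, i.e. the p associated with it.\<close>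
definition tuple_p :: "(nat \<Rightarrow> 's \<Rightarrow> nat set) \<Rightarrow> nat \<Rightarrow> nat list \<Rightarrow> 's \<Rightarrow> nat" where
  "tuple_p I N is s = length (filter (\<lambda>j. j \<in> I N s) is)"

text \<open>\<open>\<Delta>_{i_1..i_k}\<close> for a mixture with coefficients \<open>D p = \<Delta>_p \<ge> 0\<close>.\<close>
definition coef :: "(nat \<Rightarrow> 's::finite \<Rightarrow> nat set) \<Rightarrow> (('s \<Rightarrow> nat) \<Rightarrow> real) \<Rightarrow> nat \<Rightarrow> nat list \<Rightarrow> real" where
  "coef I D N is = (let p = tuple_p I N is in
     sqrt ((D p)\<^sup>2 * (\<Prod>s\<in>UNIV. fact (p s)) / fact (length is)
           * (\<Prod>s\<in>UNIV. real (card (I N s)) powr (- real (p s)))))"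

definition tuples :: "nat \<Rightarrow> nat \<Rightarrow> nat list set" where
  "tuples N k = {is. length is = k \<and> set is \<subseteq> {..<N}}"

definition hamiltonian :: "(nat \<Rightarrow> 's::finite \<Rightarrow> nat set) \<Rightarrow> (('s \<Rightarrow> nat) \<Rightarrow> real) \<Rightarrow> nat
    \<Rightarrow> (nat list \<Rightarrow> real) \<Rightarrow> (nat \<Rightarrow> real) \<Rightarrow> real" where
  "hamiltonian I D N J \<sigma> = sqrt (real N) *
     (\<Sum>k. \<Sum>is\<in>tuples N (Suc k). coef I D N is * J is * (\<Prod>j\<leftarrow>is. \<sigma> j))"

definition Delta_q :: "(('s::finite \<Rightarrow> nat) \<Rightarrow> real) \<Rightarrow> ('s \<Rightarrow> real) \<Rightarrow> ('s \<Rightarrow> nat) \<Rightarrow> real" where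
  "Delta_q D q p = sqrt (infsum (\<lambda>p'. (D p')\<^sup>2 *
       (\<Prod>s\<in>UNIV. real (p' s choose p s) * (1 - q s) ^ p s * q s ^ (p' s - p s)))
     {p'. \<forall>s. p s \<le> p' s})"

text \<open>Coefficients of \<open>\<xi>_q\<close> (only \<open>|p| \<ge> 2\<close>) and of \<open>\<tilde>\<xi>_q\<close> (all \<open>|p| \<ge> 1\<close>).\<close>
definition Delta_q2 :: "(('s::finite \<Rightarrow> nat) \<Rightarrow> real) \<Rightarrow> ('s \<Rightarrow> real) \<Rightarrow> ('s \<Rightarrow> nat) \<Rightarrow> real" where
  "Delta_q2 D q p = (if norm_p p \<ge> 2 then Delta_q D q p else 0)"

definition Delta_q1 :: "(('s::finite \<Rightarrow> nat) \<Rightarrow> real) \<Rightarrow> ('s \<Rightarrow> real) \<Rightarrow> ('s \<Rightarrow> nat) \<Rightarrow> real" where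
  "Delta_q1 D q p = (if norm_p p \<ge> 1 then Delta_q D q p else 0)"

definition Bset :: "(nat \<Rightarrow> 's::finite \<Rightarrow> nat set) \<Rightarrow> nat \<Rightarrow> nat \<Rightarrow> real \<Rightarrow> (nat \<Rightarrow> nat \<Rightarrow> real) set" where
  "Bset I N n \<rho> = {\<Sigma> \<in> PiE {..<n} (\<lambda>_. S_N I N).
      \<forall>i<n. \<forall>j<n. i \<noteq> j \<longrightarrow> (\<forall>s. \<bar>overlap I N s (\<Sigma> i) (\<Sigma> j)\<bar> \<le> \<rho>)}"

definition free_energy :: "(nat \<Rightarrow> 's::finite \<Rightarrow> nat set) \<Rightarrow> (('s \<Rightarrow> nat) \<Rightarrow> real) \<Rightarrow> nat
    \<Rightarrow> nat \<Rightarrow> real \<Rightarrow> (nat list \<Rightarrow> real) \<Rightarrow> real" where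
  "free_energy I D N n \<rho> J = 1 / (real N * real n) *
     ln (set_lebesgue_integral (PiM {..<n} (\<lambda>_. mu_N I N)) (Bset I N n \<rho>)
           (\<lambda>\<Sigma>. exp (\<Sum>i<n. hamiltonian I D N J (\<Sigma> i))))"

definition exp_free_energy :: "(nat \<Rightarrow> 's::finite \<Rightarrow> nat set) \<Rightarrow> (('s \<Rightarrow> nat) \<Rightarrow> real) \<Rightarrow> nat
    \<Rightarrow> nat \<Rightarrow> real \<Rightarrow> real" where
  "exp_free_energy I D N n \<rho> = integral\<^sup>L disorder (free_energy I D N n \<rho>)"

end

(*
  The mixtures tilde-xi_q and xi_q have the same coefficients in degree at least two, so their
  Hamiltonians differ by the external field sqrt N * (h . sigma), h_j = Delta_[j] J_[j], of
  tilde-xi_q.  Summed over n replicas with pairwise overlaps at most rho, the field contributes at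
  most sqrt N * |h| * |sigma^1 + ... + sigma^n| <= N n |h| sqrt (1/n + rho) by Cauchy-Schwarz,
  and the logarithms of two integrals of exponentials differ by at most the sup of the difference
  of the exponents.  So the free energies differ by at most |h| sqrt (1/n + rho), and since
  E |h|^2 is bounded by the degree-one coefficients of tilde-xi_q uniformly in N, the expected
  free energies differ by O(sqrt (1/n + rho)).  The bound holds for every N.
*)

theory Submission
  imports Defs
begin

lemma finite_measure_uniform_measure:
  assumes "A \<in> sets M"
  shows "finite_measure (uniform_measure M A)"
proof
  have "emeasure (uniform_measure M A) (space (uniform_measure M A)) = emeasure M A / emeasure M A"
    using assms by (simp add: Int_absorb2 sets.sets_into_space)
  also have "\<dots> \<le> 1"
  proof (cases "emeasure M A = 0 \<or> emeasure M A = \<infinity>")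
    case True
    then show ?thesis by (auto simp: divide_ennreal_def)
  next
    case False
    then show ?thesis by (simp add: top.not_eq_extremum)
  qed
  finally show "emeasure (uniform_measure M A) (space (uniform_measure M A)) \<noteq> \<infinity>"
    by (metis ennreal_one_less_top infinity_ennreal_def leD)
qed

lemma finite_measure_PiM:
  assumes "finite I" and finite_M: "\<And>i. finite_measure (M i)"
  shows "finite_measure (PiM I M)"
proof -
  interpret product_sigma_finite M
    by (intro product_sigma_finite.intro finite_measure.axioms(1) finite_M)
  interpret finite_product_sigma_finite M I
    by standard (rule assms(1))
  show ?thesis
  proof
    have "emeasure (PiM I M) (PiE I (\<lambda>i. space (M i))) = (\<Prod>i\<in>I. emeasure (M i) (space (M i)))"
      by (rule measure_times) simp
    also have "\<dots> \<noteq> \<infinity>"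
      using finite_measure.emeasure_finite[OF finite_M] by (simp add: ennreal_prod_eq_top)
    finally show "emeasure (PiM I M) (space (PiM I M)) \<noteq> \<infinity>"
      by (simp add: space_PiM)
  qed
qed

(* The next two rules are not declared [measurable]: globally they make the measurability
   simproc loop, so they are supplied locally where needed. *)
lemma borel_measurable_prod_list:
  fixes f :: "'a \<Rightarrow> 'b \<Rightarrow> real"
  assumes "\<And>j. j \<in> set js \<Longrightarrow> (\<lambda>x. f x j) \<in> borel_measurable M"
  shows "(\<lambda>x. \<Prod>j\<leftarrow>js. f x j) \<in> borel_measurable M"
  using assms by (induction js) auto

lemma measurable_component_component:
  assumes "i \<in> A" and "j \<in> B i"
  shows "(\<lambda>\<Sigma>. \<Sigma> i j) \<in> borel_measurable (PiM A (\<lambda>i. PiM (B i) (\<lambda>_. lborel)))"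
  using measurable_compose[OF measurable_component_singleton[of i A "\<lambda>i. PiM (B i) (\<lambda>_. lborel)"]
      measurable_component_singleton[of j "B i" "\<lambda>_. lborel"]] assms
  by simp

lemma abs_ln_integral_diff_le:
  fixes f g :: "'a \<Rightarrow> real"
  assumes f_meas: "f \<in> borel_measurable M" and g_meas: "g \<in> borel_measurable M"
    and g_nonneg: "\<And>x. x \<in> space M \<Longrightarrow> 0 \<le> g x"
    and f_le: "\<And>x. x \<in> space M \<Longrightarrow> f x \<le> exp K * g x"
    and g_le: "\<And>x. x \<in> space M \<Longrightarrow> g x \<le> exp K * f x"
    and "0 \<le> K"
  shows "\<bar>ln (integral\<^sup>L M f) - ln (integral\<^sup>L M g)\<bar> \<le> K"
proof -
  have f_nonneg: "0 \<le> f x" if "x \<in> space M" for x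
  proof -
    have "0 \<le> exp K * f x"
      using g_nonneg[OF that] g_le[OF that] by linarith
    then show ?thesis by (simp add: zero_le_mult_iff)
  qed
  have integrable_iff: "integrable M f \<longleftrightarrow> integrable M g"
  proof
    assume "integrable M g"
    then show "integrable M f"
      by (rule Bochner_Integration.integrable_bound[OF integrable_mult_right[where c="exp K"] f_meas])
         (auto simp: f_nonneg g_nonneg f_le)
  next
    assume "integrable M f"
    then show "integrable M g"
      by (rule Bochner_Integration.integrable_bound[OF integrable_mult_right[where c="exp K"] g_meas])
         (auto simp: f_nonneg g_nonneg g_le)
  qed
  show ?thesis
  proof (cases "integrable M g")
    case True
    then have "integrable M f" using integrable_iff by simp
    then have int_f_le: "integral\<^sup>L M f \<le> exp K * integral\<^sup>L M g"
      and int_g_le: "integral\<^sup>L M g \<le> exp K * integral\<^sup>L M f"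
      using integral_mono[OF _ integrable_mult_right] True f_le g_le by auto
    have "0 \<le> integral\<^sup>L M f"
      using f_nonneg by (simp add: integral_nonneg)
    show ?thesis
    proof (cases "integral\<^sup>L M g = 0")
      case True
      then show ?thesis
        using int_f_le \<open>0 \<le> integral\<^sup>L M f\<close> \<open>0 \<le> K\<close> by simp
    next
      case False
      then have g_pos: "0 < integral\<^sup>L M g"
        using g_nonneg by (simp add: integral_nonneg order_less_le)
      then have "0 < exp K * integral\<^sup>L M f"
        using int_g_le by linarith
      then have f_pos: "0 < integral\<^sup>L M f"
        by (simp add: zero_less_mult_iff)
      have "ln (integral\<^sup>L M f) \<le> ln (exp K * integral\<^sup>L M g)"
        and "ln (integral\<^sup>L M g) \<le> ln (exp K * integral\<^sup>L M f)"
        using int_f_le int_g_le f_pos g_pos by (simp_all only: ln_le_cancel_iff exp_gt_zero mult_pos_pos)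
      moreover have "ln (exp K * integral\<^sup>L M g) = K + ln (integral\<^sup>L M g)"
        and "ln (exp K * integral\<^sup>L M f) = K + ln (integral\<^sup>L M f)"
        using f_pos g_pos by (simp_all add: ln_mult)
      ultimately show ?thesis
        by linarith
    qed
  qed (use integrable_iff \<open>0 \<le> K\<close> in \<open>simp add: not_integrable_integral_eq\<close>)
qed

lemma abs_integral_diff_le:
  fixes f g h :: "'a \<Rightarrow> real"
  assumes f_meas: "f \<in> borel_measurable M" and g_meas: "g \<in> borel_measurable M"
    and "integrable M h" and diff_le: "\<And>x. x \<in> space M \<Longrightarrow> \<bar>f x - g x\<bar> \<le> h x"
  shows "\<bar>integral\<^sup>L M f - integral\<^sup>L M g\<bar> \<le> integral\<^sup>L M h"
proof -
  have diff_int: "integrable M (\<lambda>x. f x - g x)"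
  proof (rule Bochner_Integration.integrable_bound[OF \<open>integrable M h\<close>])
    show "(\<lambda>x. f x - g x) \<in> borel_measurable M"
      using f_meas g_meas by (rule borel_measurable_diff)
    show "AE x in M. norm (f x - g x) \<le> norm (h x)"
      using diff_le by (intro AE_I2) (metis abs_ge_self order_trans real_norm_def)
  qed
  have "0 \<le> integral\<^sup>L M h"
    using diff_le by (intro Bochner_Integration.integral_nonneg) (metis abs_ge_zero order_trans)
  show ?thesis
  proof (cases "integrable M g")
    case True
    then have "integrable M f"
      using Bochner_Integration.integrable_add[OF diff_int True] by simp
    then have "\<bar>integral\<^sup>L M f - integral\<^sup>L M g\<bar> = \<bar>integral\<^sup>L M (\<lambda>x. f x - g x)\<bar>"
      using True by simp
    also have "\<dots> \<le> integral\<^sup>L M (\<lambda>x. \<bar>f x - g x\<bar>)"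
      by (rule integral_abs_bound)
    also have "\<dots> \<le> integral\<^sup>L M h"
      using diff_int \<open>integrable M h\<close> diff_le by (intro integral_mono) auto
    finally show ?thesis .
  next
    case False
    then have "\<not> integrable M f"
      using Bochner_Integration.integrable_diff[OF _ diff_int, of f] by auto
    then show ?thesis
      using False \<open>0 \<le> integral\<^sup>L M h\<close> by (simp add: not_integrable_integral_eq)
  qed
qed

lemma sum_square_of_sum_le:
  fixes x :: "'i \<Rightarrow> 'j \<Rightarrow> real" and a b :: real
  assumes "finite S" and "0 \<le> b"
    and diag: "\<And>i. i \<in> S \<Longrightarrow> (\<Sum>j\<in>A. (x i j)\<^sup>2) \<le> a"
    and off_diag:
      "\<And>i k. i \<in> S \<Longrightarrow> k \<in> S \<Longrightarrow> i \<noteq> k \<Longrightarrow> (\<Sum>j\<in>A. x i j * x k j) \<le> b"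
  shows "(\<Sum>j\<in>A. (\<Sum>i\<in>S. x i j)\<^sup>2) \<le> real (card S) * a + (real (card S))\<^sup>2 * b"
proof -
  have "(\<Sum>j\<in>A. (\<Sum>i\<in>S. x i j)\<^sup>2) = (\<Sum>i\<in>S. \<Sum>k\<in>S. \<Sum>j\<in>A. x i j * x k j)"
    by (simp add: power2_eq_square sum_product sum.swap[of _ A])
  also have "\<dots> \<le> (\<Sum>i\<in>S. \<Sum>k\<in>S. (if i = k then a else 0) + b)"
  proof (intro sum_mono)
    fix i k assume "i \<in> S" "k \<in> S"
    then show "(\<Sum>j\<in>A. x i j * x k j) \<le> (if i = k then a else 0) + b"
      using diag[of i] off_diag[of i k] \<open>0 \<le> b\<close> by (auto simp: power2_eq_square)
  qed
  also have "\<dots> = real (card S) * a + (real (card S))\<^sup>2 * b"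
    using \<open>finite S\<close> by (simp add: sum.distrib power2_eq_square algebra_simps)
  finally show ?thesis .
qed

lemma suminf_diff_first_term:
  fixes f g :: "nat \<Rightarrow> real"
  assumes f_eq: "\<And>k. f k = g k + (if k = 0 then c else 0)"
  shows "suminf f - suminf g \<in> {0, c}"
proof -
  have first_term: "(\<lambda>k. if k = 0 then c else 0) sums c"
    using sums_single[of 0 "\<lambda>_. c"] by simp
  have f_fun: "f = (\<lambda>k. g k + (if k = 0 then c else 0))"
    using f_eq by (intro ext)
  have "summable f \<longleftrightarrow> summable g"
    using summable_Suc_iff[of f] summable_Suc_iff[of g] f_eq by simp
  show ?thesis
  proof (cases "summable g")
    case True
    have "f sums (suminf g + c)"
      unfolding f_fun by (intro sums_add summable_sums True first_term)
    then have "suminf f = suminf g + c"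
      by (rule sums_unique[symmetric])
    then show ?thesis by simp
  next
    case False
    \<comment> \<open>both sums are then the junk value \<open>THE s. False\<close>\<close>
    then have "(\<lambda>s. f sums s) = (\<lambda>s. g sums s)"
      using \<open>summable f \<longleftrightarrow> summable g\<close> sums_summable by blast
    then show ?thesis
      by (simp add: suminf_def)
  qed
qed

lemma tendsto_Limsup_abs_zero:
  fixes f :: "nat \<Rightarrow> nat \<Rightarrow> real \<Rightarrow> real"
  assumes f_le: "\<And>N n \<rho>. 0 \<le> \<rho> \<Longrightarrow> \<bar>f N n \<rho>\<bar> \<le> C * sqrt (1 / n + \<rho>)"
  shows "((\<lambda>(n, \<rho>). Limsup sequentially (\<lambda>N. ereal \<bar>f N n \<rho>\<bar>)) \<longlongrightarrow> 0)
    (sequentially \<times>\<^sub>F at_right 0)"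
proof -
  let ?F = "sequentially \<times>\<^sub>F at_right (0::real)"
  let ?L = "\<lambda>(n, \<rho>). Limsup sequentially (\<lambda>N. ereal \<bar>f N n \<rho>\<bar>)"
  let ?u = "\<lambda>x. C * sqrt (1 / real (fst x) + snd x)"
  have lower: "\<forall>\<^sub>F x in ?F. 0 \<le> ?L x"
    by (intro always_eventually allI) (auto intro: le_Limsup)
  have "\<forall>\<^sub>F x in ?F. 0 < snd x"
    unfolding eventually_prod_filter
    by (intro exI[of _ "\<lambda>_. True"] exI[of _ "\<lambda>\<rho>. 0 < \<rho>"]) (simp add: eventually_at_right_less)
  then have upper: "\<forall>\<^sub>F x in ?F. ?L x \<le> ereal (?u x)"
    by eventually_elim (auto intro!: Limsup_bounded always_eventually f_le)
  have "(?u \<longlongrightarrow> C * sqrt (0 + 0)) ?F"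
    by (intro tendsto_intros filterlim_compose[OF lim_const_over_n filterlim_fst]
        filterlim_compose[OF tendsto_ident_at filterlim_snd])
  then have limit: "((\<lambda>x. ereal (?u x)) \<longlongrightarrow> 0) ?F"
    by (simp add: zero_ereal_def)
  show ?thesis
    by (rule tendsto_sandwich[OF lower upper tendsto_const limit])
qed

lemma sets_sphere_unif [measurable_cong]: "sets (sphere_unif A) = sets (PiM A (\<lambda>_. lborel))"
  unfolding sphere_unif_def by simp

lemma sets_unit_ball_fin:
  assumes "finite A"
  shows "unit_ball_fin A \<in> sets (PiM A (\<lambda>_. lborel))"
proof -
  have "unit_ball_fin A = {x \<in> space (PiM A (\<lambda>_. lborel)). (\<Sum>i\<in>A. (x i)\<^sup>2) \<le> 1}"
    by (auto simp: unit_ball_fin_def space_PiM)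
  also have "\<dots> \<in> sets (PiM A (\<lambda>_. lborel))"
    using assms by measurable
  finally show ?thesis .
qed

lemma finite_measure_sphere_unif: "finite A \<Longrightarrow> finite_measure (sphere_unif A)"
  unfolding sphere_unif_def
  by (intro finite_measure.finite_measure_distr finite_measure_uniform_measure sets_unit_ball_fin)
     (simp_all add: measurable_cong_sets[OF sets_uniform_measure refl])

lemma prob_space_disorder: "prob_space disorder"
  unfolding disorder_def by (intro prob_space_PiM prob_space_normal_density) simp

lemma space_disorder: "space disorder = UNIV"
  unfolding disorder_def by (simp add: space_PiM)

(* Not a global [measurable] rule either: it would capture every component projection. *)
lemma disorder_component_measurable: "(\<lambda>J. J is) \<in> borel_measurable disorder"
  unfolding disorder_def by measurable

lemma disorder_component_second_moment:
  shows "integrable disorder (\<lambda>J. (J is)\<^sup>2)" and "(\<integral>J. (J is)\<^sup>2 \<partial>disorder) = 1"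
proof -
  let ?G = "density lborel std_normal_density"
  have distr_eq: "distr disorder ?G (\<lambda>J. J is) = ?G"
    unfolding disorder_def by (rule distr_PiM_component) (auto intro: prob_space_normal_density)
  have J_meas: "(\<lambda>J. J is) \<in> disorder \<rightarrow>\<^sub>M ?G"
    unfolding disorder_def by (rule measurable_component_singleton) simp
  have sq_meas: "(\<lambda>x::real. x\<^sup>2) \<in> borel_measurable ?G"
    by (simp add: measurable_cong_sets[OF sets_density refl])
  have G_integrable: "integrable ?G (\<lambda>x::real. x\<^sup>2)"
    by (subst integrable_density) (auto intro: integrable_std_normal_moment[of 2])
  have G_integral: "integral\<^sup>L ?G (\<lambda>x::real. x\<^sup>2) = 1"
    using integral_std_normal_moment_even[of 1] by (subst integral_density) auto
  show "integrable disorder (\<lambda>J. (J is)\<^sup>2)"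
    using integrable_distr_eq[OF J_meas sq_meas] G_integrable distr_eq by simp
  show "(\<integral>J. (J is)\<^sup>2 \<partial>disorder) = 1"
    using integral_distr[OF J_meas sq_meas] G_integral distr_eq by simp
qed

lemma hamiltonian_measurable [measurable (raw)]:
  assumes "f \<in> M \<rightarrow>\<^sub>M disorder" and "g \<in> M \<rightarrow>\<^sub>M PiM {..<N} (\<lambda>_. lborel)"
  shows "(\<lambda>x. hamiltonian I D N (f x) (g x)) \<in> borel_measurable M"
proof -
  note borel_measurable_prod_list [measurable (raw)] disorder_component_measurable [measurable]
  have "(\<lambda>(J, \<sigma>). hamiltonian I D N J \<sigma>) \<in> borel_measurable (disorder \<Otimes>\<^sub>M PiM {..<N} (\<lambda>_. lborel))"
    unfolding hamiltonian_def tuples_def by measurable auto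
  from measurable_compose[OF measurable_Pair[OF assms] this] show ?thesis
    by simp
qed

locale species_partition =
  fixes I :: "nat \<Rightarrow> 's::finite \<Rightarrow> nat set"
  assumes blocks_disjoint: "\<And>N s s'. s \<noteq> s' \<Longrightarrow> I N s \<inter> I N s' = {}"
    and blocks_cover: "\<And>N. (\<Union>s. I N s) = {..<N}"
begin

lemma block_lessThan [simp]: "j \<in> I N s \<Longrightarrow> j < N"
  using blocks_cover by blast

lemma finite_block [simp]: "finite (I N s)"
  using finite_subset[of "I N s" "{..<N}"] by fastforce

lemma block_unique: "j \<in> I N s \<Longrightarrow> j \<in> I N s' \<Longrightarrow> s = s'"
  using blocks_disjoint by blast

lemma ex_block: "j < N \<Longrightarrow> \<exists>s. j \<in> I N s"
  using blocks_cover by blast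

lemma sum_lessThan_blocks: "(\<Sum>j<N. f j) = (\<Sum>s\<in>UNIV. \<Sum>j\<in>I N s. f j)"
  using sum.UNION_disjoint[of UNIV "I N" f] blocks_cover[of N] by (auto dest: block_unique)

lemma sets_mu_N [measurable_cong]: "sets (mu_N I N) = sets (PiM {..<N} (\<lambda>_. lborel))"
  unfolding mu_N_def by simp

lemma finite_measure_mu_N: "finite_measure (mu_N I N)"
  unfolding mu_N_def
proof (intro finite_measure.finite_measure_distr finite_measure_PiM finite_measure_sphere_unif finite_block)
  show "(\<lambda>\<omega>. restrict (\<lambda>i. \<omega> (THE s. i \<in> I N s) i) {..<N})
      \<in> PiM UNIV (\<lambda>s. sphere_unif (I N s)) \<rightarrow>\<^sub>M PiM {..<N} (\<lambda>_. lborel)"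
  proof (rule measurable_restrict)
    fix i assume "i \<in> {..<N}"
    then obtain s where "i \<in> I N s"
      using ex_block by blast
    then have "(\<lambda>\<omega>. \<omega> s i) \<in> borel_measurable (PiM UNIV (\<lambda>s. PiM (I N s) (\<lambda>_. lborel)))"
      by (intro measurable_component_component) simp_all
    moreover have "(THE s. i \<in> I N s) = s"
      using \<open>i \<in> I N s\<close> block_unique by blast
    ultimately show
      "(\<lambda>\<omega>. \<omega> (THE s. i \<in> I N s) i) \<in> PiM UNIV (\<lambda>s. sphere_unif (I N s)) \<rightarrow>\<^sub>M lborel"
      by (simp add: measurable_cong_sets[OF sets_PiM_cong[OF refl sets_sphere_unif] refl])
  qed
qed simp

lemma pred_Bset [measurable]:
  "Measurable.pred (PiM {..<n} (\<lambda>_. PiM {..<N} (\<lambda>_. lborel))) (\<lambda>\<Sigma>. \<Sigma> \<in> Bset I N n \<rho>)"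
proof -
  note measurable_component_component [measurable]
  have "Measurable.pred (PiM {..<n} (\<lambda>_. PiM {..<N} (\<lambda>_. lborel)))
     (\<lambda>\<Sigma>. \<forall>i<n. (\<forall>s. (\<Sum>j\<in>I N s. (\<Sigma> i j)\<^sup>2) = real (card (I N s))) \<and>
        (\<forall>k<n. i \<noteq> k \<longrightarrow> (\<forall>s. \<bar>overlap I N s (\<Sigma> i) (\<Sigma> k)\<bar> \<le> \<rho>)))"
    unfolding overlap_def by measurable
  then show ?thesis
    by (rule measurable_cong[THEN iffD1, rotated]) (auto simp: Bset_def S_N_def space_PiM PiE_iff)
qed

lemma Boltzmann_weight_measurable:
  "(\<lambda>(J, \<Sigma>). indicator (Bset I N n \<rho>) \<Sigma> * exp (\<Sum>i<n. hamiltonian I D N J (\<Sigma> i)))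
    \<in> borel_measurable (disorder \<Otimes>\<^sub>M PiM {..<n} (\<lambda>_. mu_N I N))"
  by measurable

lemma free_energy_measurable: "free_energy I D N n \<rho> \<in> borel_measurable disorder"
proof -
  interpret finite_measure "PiM {..<n} (\<lambda>_. mu_N I N)"
    by (intro finite_measure_PiM finite_measure_mu_N) simp
  show ?thesis
    unfolding free_energy_def[abs_def] set_lebesgue_integral_def by measurable
qed

lemma norm_p_tuple_p: "set js \<subseteq> {..<N} \<Longrightarrow> norm_p (tuple_p I N js) = length js"
proof (induction js)
  case Nil
  then show ?case by (simp add: norm_p_def tuple_p_def)
next
  case (Cons j js)
  then obtain s where "j \<in> I N s"
    using ex_block[of j N] by auto
  then have "{t. j \<in> I N t} = {s}"
    using block_unique by blast
  then have "(\<Sum>t\<in>UNIV. of_bool (j \<in> I N t) :: nat) = 1"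
    by simp
  moreover have "tuple_p I N (j # js) t = of_bool (j \<in> I N t) + tuple_p I N js t" for t
    by (simp add: tuple_p_def)
  ultimately show ?case
    using Cons by (simp add: norm_p_def sum.distrib)
qed

lemma tuple_p_singleton: "j \<in> I N s \<Longrightarrow> tuple_p I N [j] = indicator {s}"
  unfolding tuple_p_def by (rule ext) (auto simp: indicator_def dest: block_unique)

definition external_field ::
    "(('s \<Rightarrow> nat) \<Rightarrow> real) \<Rightarrow> nat \<Rightarrow> (nat list \<Rightarrow> real) \<Rightarrow> (nat \<Rightarrow> real) \<Rightarrow> real"
  where "external_field D N J \<sigma> = (\<Sum>j<N. coef I D N [j] * J [j] * \<sigma> j)"

(* Not an equality: where the series defining the Hamiltonians diverges, both are the same junk
   value. *)
lemma hamiltonian_diff_external_field: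
  assumes D_eq: "\<And>p. 2 \<le> norm_p p \<Longrightarrow> D1 p = D2 p"
    and D2_zero: "\<And>p. norm_p p \<le> 1 \<Longrightarrow> D2 p = 0"
  shows "hamiltonian I D1 N J \<sigma> - hamiltonian I D2 N J \<sigma> \<in> {0, sqrt N * external_field D1 N J \<sigma>}"
proof -
  define T where "T D k = (\<Sum>js\<in>tuples N (Suc k). coef I D N js * J js * (\<Prod>j\<leftarrow>js. \<sigma> j))" for D k
  have norm_tuple: "norm_p (tuple_p I N js) = Suc k" if "js \<in> tuples N (Suc k)" for js k
    using that norm_p_tuple_p by (simp add: tuples_def)
  have "T D1 k = T D2 k + (if k = 0 then external_field D1 N J \<sigma> else 0)" for k
  proof (cases k)
    case 0
    have "tuples N 1 = (\<lambda>j. [j]) ` {..<N}"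
      by (auto simp: tuples_def length_Suc_conv)
    moreover have "coef I D2 N js = 0" if "js \<in> tuples N 1" for js
      using norm_tuple[of js 0] that D2_zero by (simp add: coef_def)
    ultimately show ?thesis
      using 0 by (simp add: T_def external_field_def sum.reindex inj_on_def)
  next
    case (Suc k')
    then have "coef I D1 N js = coef I D2 N js" if "js \<in> tuples N (Suc k)" for js
      using norm_tuple[OF that] D_eq by (simp add: coef_def)
    then show ?thesis
      using Suc by (simp add: T_def)
  qed
  then have "suminf (T D1) - suminf (T D2) \<in> {0, external_field D1 N J \<sigma>}"
    by (rule suminf_diff_first_term)
  moreover have "hamiltonian I D N J \<sigma> = sqrt N * suminf (T D)" for D
    by (simp add: hamiltonian_def T_def[abs_def])
  ultimately show ?thesis
    by (auto simp flip: right_diff_distrib)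
qed

lemma Bset_self_inner:
  assumes "\<Sigma> \<in> Bset I N n \<rho>" and "i < n"
  shows "(\<Sum>j<N. (\<Sigma> i j)\<^sup>2) = N"
proof -
  have "\<Sigma> i \<in> S_N I N"
    using assms by (auto simp: Bset_def)
  then have "(\<Sum>j<N. (\<Sigma> i j)\<^sup>2) = (\<Sum>s\<in>UNIV. real (card (I N s)))"
    by (simp add: sum_lessThan_blocks S_N_def)
  also have "\<dots> = N"
    using sum_lessThan_blocks[of "\<lambda>_. 1::real" N] by simp
  finally show ?thesis .
qed

lemma Bset_cross_inner:
  assumes "\<Sigma> \<in> Bset I N n \<rho>" and "i < n" "k < n" "i \<noteq> k"
  shows "(\<Sum>j<N. \<Sigma> i j * \<Sigma> k j) \<le> N * \<rho>"
proof -
  have "(\<Sum>j\<in>I N s. \<Sigma> i j * \<Sigma> k j) \<le> card (I N s) * \<rho>" for s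
  proof (cases "I N s = {}")
    case False
    then have "card (I N s) > 0"
      by (simp add: card_gt_0_iff)
    moreover have "\<bar>overlap I N s (\<Sigma> i) (\<Sigma> k)\<bar> \<le> \<rho>"
      using assms by (auto simp: Bset_def)
    ultimately show ?thesis
      by (simp add: overlap_def divide_le_eq abs_le_iff mult.commute)
  qed simp
  then have "(\<Sum>j<N. \<Sigma> i j * \<Sigma> k j) \<le> (\<Sum>s\<in>UNIV. card (I N s) * \<rho>)"
    by (simp add: sum_lessThan_blocks sum_mono)
  also have "\<dots> = N * \<rho>"
    using sum_lessThan_blocks[of "\<lambda>_. 1::real" N] by (simp add: sum_distrib_right)
  finally show ?thesis .
qed

lemma sum_replicas_square_le:
  assumes "\<Sigma> \<in> Bset I N n \<rho>" and "0 \<le> \<rho>" and "S \<subseteq> {..<n}"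
  shows "(\<Sum>j<N. (\<Sum>i\<in>S. \<Sigma> i j)\<^sup>2) \<le> N * n\<^sup>2 * (1 / n + \<rho>)"
proof -
  have "finite S"
    using assms(3) finite_subset by blast
  have "card S \<le> n"
    using card_mono[OF _ assms(3)] by simp
  have "(\<Sum>j<N. (\<Sum>i\<in>S. \<Sigma> i j)\<^sup>2) \<le> real (card S) * N + (real (card S))\<^sup>2 * (N * \<rho>)"
  proof (rule sum_square_of_sum_le)
    fix i k assume "i \<in> S" "k \<in> S" "i \<noteq> k"
    then show "(\<Sum>j<N. \<Sigma> i j * \<Sigma> k j) \<le> N * \<rho>"
      using Bset_cross_inner[OF assms(1)] assms(3) by blast
  qed (use \<open>finite S\<close> \<open>0 \<le> \<rho>\<close> Bset_self_inner[OF assms(1)] assms(3) in auto)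
  also have "\<dots> \<le> n * N + n\<^sup>2 * (N * \<rho>)"
  proof (rule add_mono)
    show "real (card S) * N \<le> n * N"
      using \<open>card S \<le> n\<close> by (simp add: mult_right_mono)
    show "(real (card S))\<^sup>2 * (N * \<rho>) \<le> n\<^sup>2 * (N * \<rho>)"
      using \<open>card S \<le> n\<close> \<open>0 \<le> \<rho>\<close> by (simp add: mult_right_mono power_mono)
  qed
  also have "\<dots> = N * n\<^sup>2 * (1 / n + \<rho>)"
    by (cases "n = 0") (simp_all add: field_simps power2_eq_square)
  finally show ?thesis .
qed

definition field_sqnorm :: "(('s \<Rightarrow> nat) \<Rightarrow> real) \<Rightarrow> nat \<Rightarrow> (nat list \<Rightarrow> real) \<Rightarrow> real"
  where "field_sqnorm D N J = (\<Sum>j<N. (coef I D N [j] * J [j])\<^sup>2)"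

lemma sum_hamiltonian_diff_le:
  assumes D_eq: "\<And>p. 2 \<le> norm_p p \<Longrightarrow> D1 p = D2 p"
    and D2_zero: "\<And>p. norm_p p \<le> 1 \<Longrightarrow> D2 p = 0"
    and "\<Sigma> \<in> Bset I N n \<rho>" and "0 \<le> \<rho>"
  shows "\<bar>(\<Sum>i<n. hamiltonian I D1 N J (\<Sigma> i)) - (\<Sum>i<n. hamiltonian I D2 N J (\<Sigma> i))\<bar>
    \<le> N * n * sqrt (field_sqnorm D1 N J * (1 / n + \<rho>))"
proof -
  let ?d = "\<lambda>i. hamiltonian I D1 N J (\<Sigma> i) - hamiltonian I D2 N J (\<Sigma> i)"
  define S where "S = {i\<in>{..<n}. ?d i \<noteq> 0}"
  define a where "a j = coef I D1 N [j] * J [j]" for j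
  have "(\<Sum>i<n. hamiltonian I D1 N J (\<Sigma> i)) - (\<Sum>i<n. hamiltonian I D2 N J (\<Sigma> i)) = (\<Sum>i<n. ?d i)"
    by (simp add: sum_subtractf)
  also have "\<dots> = (\<Sum>i\<in>S. ?d i)"
    unfolding S_def by (rule sum.mono_neutral_right) auto
  also have "\<dots> = sqrt N * (\<Sum>i\<in>S. external_field D1 N J (\<Sigma> i))"
    using hamiltonian_diff_external_field[of D1 D2, OF D_eq D2_zero]
    by (auto simp: S_def sum_distrib_left intro!: sum.cong)
  also have "(\<Sum>i\<in>S. external_field D1 N J (\<Sigma> i)) = (\<Sum>j<N. a j * (\<Sum>i\<in>S. \<Sigma> i j))"
    unfolding external_field_def a_def by (simp add: sum_distrib_left sum.swap[of _ S] mult.assoc)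
  finally have diff_eq: "(\<Sum>i<n. hamiltonian I D1 N J (\<Sigma> i)) - (\<Sum>i<n. hamiltonian I D2 N J (\<Sigma> i))
      = sqrt N * (\<Sum>j<N. a j * (\<Sum>i\<in>S. \<Sigma> i j))" .
  have "(\<Sum>j<N. a j * (\<Sum>i\<in>S. \<Sigma> i j))\<^sup>2
      \<le> (\<Sum>j<N. (a j)\<^sup>2) * (\<Sum>j<N. (\<Sum>i\<in>S. \<Sigma> i j)\<^sup>2)"
    by (rule Cauchy_Schwarz_ineq_sum)
  also have "\<dots> \<le> field_sqnorm D1 N J * (N * n\<^sup>2 * (1 / n + \<rho>))"
    using assms S_def unfolding field_sqnorm_def a_def[symmetric]
    by (intro mult_left_mono sum_replicas_square_le) (auto intro: sum_nonneg)
  finally have "\<bar>\<Sum>j<N. a j * (\<Sum>i\<in>S. \<Sigma> i j)\<bar>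
      \<le> sqrt (field_sqnorm D1 N J * (N * n\<^sup>2 * (1 / n + \<rho>)))"
    using real_sqrt_le_mono real_sqrt_abs by metis
  also have "\<dots> = sqrt N * (n * sqrt (field_sqnorm D1 N J * (1 / n + \<rho>)))"
    by (simp add: real_sqrt_mult ac_simps)
  finally have "sqrt N * \<bar>\<Sum>j<N. a j * (\<Sum>i\<in>S. \<Sigma> i j)\<bar>
      \<le> sqrt N * (sqrt N * (n * sqrt (field_sqnorm D1 N J * (1 / n + \<rho>))))"
    by (simp add: mult_left_mono)
  then show ?thesis
    unfolding diff_eq abs_mult by (simp add: mult.assoc[symmetric])
qed

lemma field_sqnorm_nonneg: "0 \<le> field_sqnorm D N J"
  unfolding field_sqnorm_def by (simp add: sum_nonneg)

lemma free_energy_diff_le: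
  assumes D_eq: "\<And>p. 2 \<le> norm_p p \<Longrightarrow> D1 p = D2 p"
    and D2_zero: "\<And>p. norm_p p \<le> 1 \<Longrightarrow> D2 p = 0"
    and "0 \<le> \<rho>"
  shows "\<bar>free_energy I D1 N n \<rho> J - free_energy I D2 N n \<rho> J\<bar>
    \<le> sqrt (field_sqnorm D1 N J * (1 / n + \<rho>))"
proof (cases "N = 0 \<or> n = 0")
  case True
  then show ?thesis
    using field_sqnorm_nonneg \<open>0 \<le> \<rho>\<close> by (auto simp: free_energy_def)
next
  case False
  let ?P = "PiM {..<n} (\<lambda>_. mu_N I N)"
  define K where "K = real N * n * sqrt (field_sqnorm D1 N J * (1 / n + \<rho>))"
  define f where
    "f D \<Sigma> = indicator (Bset I N n \<rho>) \<Sigma> * exp (\<Sum>i<n. hamiltonian I D N J (\<Sigma> i))" for D \<Sigma>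
  have exp_le: "exp a \<le> exp K * exp b \<and> exp b \<le> exp K * exp a" if "\<bar>a - b\<bar> \<le> K" for a b
  proof -
    have "a \<le> K + b" "b \<le> K + a"
      using that by linarith+
    then show ?thesis
      by (simp flip: exp_add)
  qed
  have diff_le: "\<bar>(\<Sum>i<n. hamiltonian I D1 N J (\<Sigma> i)) - (\<Sum>i<n. hamiltonian I D2 N J (\<Sigma> i))\<bar> \<le> K"
    if "\<Sigma> \<in> Bset I N n \<rho>" for \<Sigma>
    unfolding K_def using D_eq D2_zero that \<open>0 \<le> \<rho>\<close> by (rule sum_hamiltonian_diff_le)
  have f_meas: "f D \<in> borel_measurable ?P" for D
    using measurable_Pair2[OF Boltzmann_weight_measurable, of J] unfolding f_def
    by (simp add: space_disorder)
  have "\<bar>ln (integral\<^sup>L ?P (f D1)) - ln (integral\<^sup>L ?P (f D2))\<bar> \<le> K"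
  proof (rule abs_ln_integral_diff_le[OF f_meas f_meas])
    show "0 \<le> K"
      unfolding K_def using field_sqnorm_nonneg \<open>0 \<le> \<rho>\<close> by simp
    fix \<Sigma>
    show "0 \<le> f D2 \<Sigma>"
      unfolding f_def by simp
    show "f D1 \<Sigma> \<le> exp K * f D2 \<Sigma>" "f D2 \<Sigma> \<le> exp K * f D1 \<Sigma>"
      using exp_le[OF diff_le] by (cases "\<Sigma> \<in> Bset I N n \<rho>"; simp add: f_def)+
  qed
  then show ?thesis
    using False unfolding free_energy_def set_lebesgue_integral_def f_def K_def
    by (simp add: right_diff_distrib[symmetric] abs_mult divide_simps mult.commute)
qed

lemma coef_singleton_square_le:
  assumes "j \<in> I N s"
  shows "(coef I D N [j])\<^sup>2 \<le> (D (indicator {s}))\<^sup>2 / card (I N s)"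
proof -
  define g where "g t = real (card (I N t)) powr - real (indicator {s} t :: nat)" for t
  have "card (I N s) > 0"
    using assms card_gt_0_iff by fastforce
  have "(\<Prod>t\<in>UNIV. g t) = g s * (\<Prod>t\<in>UNIV - {s}. g t)"
    by (simp add: prod.remove)
  also have "\<dots> \<le> g s * 1"
    by (intro mult_left_mono prod_le_1) (auto simp: g_def)
  also have "g s = 1 / card (I N s)"
    using \<open>card (I N s) > 0\<close> by (simp add: g_def powr_minus_divide)
  finally have "(\<Prod>t\<in>UNIV. g t) \<le> 1 / card (I N s)"
    by simp
  moreover have "(\<Prod>t\<in>UNIV. fact (indicator {s} t :: nat) :: real) = 1"
    by (intro prod.neutral) (simp add: indicator_def)
  moreover have "0 \<le> (\<Prod>t\<in>UNIV. g t)"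
    by (simp add: prod_nonneg g_def)
  ultimately show ?thesis
    unfolding coef_def Let_def tuple_p_singleton[OF assms] g_def[symmetric]
    by (simp add: mult_left_mono divide_inverse)
qed

lemma integrable_field_sqnorm: "integrable disorder (field_sqnorm D N)"
  unfolding field_sqnorm_def power_mult_distrib
  by (intro Bochner_Integration.integrable_sum Bochner_Integration.integrable_mult_right
      disorder_component_second_moment)

lemma integral_field_sqnorm_le:
  "(\<integral>J. field_sqnorm D N J \<partial>disorder) \<le> (\<Sum>s\<in>UNIV. (D (indicator {s}))\<^sup>2)"
proof -
  have "(\<integral>J. field_sqnorm D N J \<partial>disorder) = (\<Sum>j<N. (coef I D N [j])\<^sup>2)"
    unfolding field_sqnorm_def power_mult_distrib
    by (subst Bochner_Integration.integral_sum)
       (auto simp: disorder_component_second_moment)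
  also have "\<dots> \<le> (\<Sum>s\<in>UNIV. \<Sum>j\<in>I N s. (D (indicator {s}))\<^sup>2 / card (I N s))"
    unfolding sum_lessThan_blocks by (intro sum_mono coef_singleton_square_le)
  also have "\<dots> \<le> (\<Sum>s\<in>UNIV. (D (indicator {s}))\<^sup>2)"
    by (intro sum_mono) (cases "card (I N s) = 0", auto)
  finally show ?thesis .
qed

lemma exp_free_energy_diff_le:
  assumes D_eq: "\<And>p. 2 \<le> norm_p p \<Longrightarrow> D1 p = D2 p"
    and D2_zero: "\<And>p. norm_p p \<le> 1 \<Longrightarrow> D2 p = 0"
    and "0 \<le> \<rho>"
  shows "\<bar>exp_free_energy I D1 N n \<rho> - exp_free_energy I D2 N n \<rho>\<bar>
    \<le> (1 + (\<Sum>s\<in>UNIV. (D1 (indicator {s}))\<^sup>2)) * sqrt (1 / n + \<rho>)"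
proof -
  interpret prob_space disorder
    by (rule prob_space_disorder)
  let ?h = "\<lambda>J. (1 + field_sqnorm D1 N J) * sqrt (1 / n + \<rho>)"
  have "\<bar>exp_free_energy I D1 N n \<rho> - exp_free_energy I D2 N n \<rho>\<bar> \<le> integral\<^sup>L disorder ?h"
    unfolding exp_free_energy_def
  proof (rule abs_integral_diff_le[OF free_energy_measurable free_energy_measurable])
    show "integrable disorder ?h"
      by (intro integrable_mult_left Bochner_Integration.integrable_add integrable_const
          integrable_field_sqnorm)
    fix J
    have "sqrt (1 * field_sqnorm D1 N J) \<le> (1 + field_sqnorm D1 N J) / 2"
      using field_sqnorm_nonneg by (intro arith_geo_mean_sqrt) simp_all
    then have "sqrt (field_sqnorm D1 N J) \<le> 1 + field_sqnorm D1 N J"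
      using real_sqrt_ge_zero[OF field_sqnorm_nonneg, of D1 N J] by simp
    then have "sqrt (field_sqnorm D1 N J * (1 / n + \<rho>)) \<le> ?h J"
      using \<open>0 \<le> \<rho>\<close> by (simp add: real_sqrt_mult mult_right_mono)
    then show "\<bar>free_energy I D1 N n \<rho> J - free_energy I D2 N n \<rho> J\<bar> \<le> ?h J"
      using free_energy_diff_le[OF D_eq D2_zero \<open>0 \<le> \<rho>\<close>] by (rule order_trans[rotated])
  qed
  also have "\<dots> = (1 + (\<integral>J. field_sqnorm D1 N J \<partial>disorder)) * sqrt (1 / n + \<rho>)"
    using integrable_field_sqnorm by (simp add: prob_space)
  also have "\<dots> \<le> (1 + (\<Sum>s\<in>UNIV. (D1 (indicator {s}))\<^sup>2)) * sqrt (1 / n + \<rho>)"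
    using integral_field_sqnorm_le \<open>0 \<le> \<rho>\<close> by (intro mult_right_mono) auto
  finally show ?thesis .
qed

end

theorem lemma10:
  fixes I :: "nat \<Rightarrow> 's::finite \<Rightarrow> nat set"
    and lam :: "'s \<Rightarrow> real"
    and D :: "('s \<Rightarrow> nat) \<Rightarrow> real"
    and q :: "'s \<Rightarrow> real"
  assumes disj: "\<And>N s s'. s \<noteq> s' \<Longrightarrow> I N s \<inter> I N s' = {}"
    and cover: "\<And>N. (\<Union>s. I N s) = {..<N}"
    and ratio: "\<And>s. (\<lambda>N. real (card (I N s)) / real N) \<longlonglongrightarrow> lam s"
    and lam_pos: "\<And>s. 0 < lam s" and lam_lt1: "\<And>s. lam s < 1"
    and D_nonneg: "\<And>p. 0 \<le> D p"
    and xi_finite: "\<exists>\<epsilon>>0. (\<lambda>p. (D p)\<^sup>2 * (1 + \<epsilon>) ^ norm_p p) summable_on {p. 1 \<le> norm_p p}"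
    and q_range: "\<And>s. 0 \<le> q s \<and> q s < 1"
  shows "((\<lambda>(n, \<rho>). Limsup sequentially (\<lambda>N. ereal \<bar>exp_free_energy I (Delta_q2 D q) N n \<rho>
                 - exp_free_energy I (Delta_q1 D q) N n \<rho>\<bar>)) \<longlongrightarrow> 0)
         (sequentially \<times>\<^sub>F at_right 0)"
proof -
  interpret species_partition I
    using disj cover by unfold_locales
  have "\<bar>exp_free_energy I (Delta_q2 D q) N n \<rho> - exp_free_energy I (Delta_q1 D q) N n \<rho>\<bar>
      \<le> (1 + (\<Sum>s\<in>UNIV. (Delta_q1 D q (indicator {s}))\<^sup>2)) * sqrt (1 / n + \<rho>)"
    if "0 \<le> \<rho>" for N n \<rho>
    using exp_free_energy_diff_le[of "Delta_q1 D q" "Delta_q2 D q"] that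
    by (simp add: Delta_q1_def Delta_q2_def abs_minus_commute)
  then show ?thesis
    by (rule tendsto_Limsup_abs_zero)
qed

end
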